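(* Let $P$ be a finite poset and let $\mathcal{J}\subseteq \mathrm{Hom}(P,\mathbb{N})$ be a poset ideal. Then the letterplace ideal $L(\mathcal{J},P)$ and the co-letterplace ideal $L(P,\mathcal{J})$ in $k[x_{P\times\mathbb{N}}]$ are Alexander dual: the monomials of $L(\mathcal{J},P)$ are precisely the monomials of $k[x_{P\times\mathbb{N}}]$ having a nontrivial common divisor with every monomial of $L(P,\mathcal{J})$ (and vice versa).
   Context: $\mathbb{N}=\{0,1,2,\dots\}$. For a finite poset $P$, $\mathrm{Hom}(P,\mathbb{N})$ is the set of isotone maps $\phi:P\to\mathbb{N}$ (i.e. $p\le q\Rightarrow \phi(p)\le\phi(q)$), partially ordered by $\phi\le\psi$ iff $\phi(p)\le\psi(p)$ for all $p$. A poset ideal (resp. filter) is a down-closed (resp. up-closed) subset; $\mathcal{J}^c$ denotes the complement of $\mathcal{J}$ in $\mathrm{Hom}(P,\mathbb{N})$. The ascent of $\phi\in\mathrm{Hom}(P,\mathbb{N})$ is $\Lambda\phi=\{(p,i)\in P\times\mathbb{N} : \phi(q)\le i<\phi(p)\text{ for all } q<p\}$. A marker for $\mathcal{J}$ is a pair of a poset ideal $I\subseteq P$ and an isotone map $\alpha:I\to\mathbb{N}$ such that every isotone $\phi:P\to\mathbb{N}$ with $\phi|_I=\alpha$ lies in $\mathcal{J}$; its graph is $\Gamma\alpha=\{(p,\alpha(p)):p\in I\}$. Let $k$ be a field and $k[x_{P\times\mathbb{N}}]$ the polynomial ring in variables $x_{p,i}$, $(p,i)\in P\times\mathbb{N}$;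 for finite $T\subseteq P\times\mathbb{N}$ put $m_T=\prod_{t\in T}x_t$. The co-letterplace ideal $L(P,\mathcal{J})$ is generated by the $m_{\Gamma\alpha}$ for all markers $\alpha$ of $\mathcal{J}$; the letterplace ideal $L(\mathcal{J},P)$ is generated by the $m_{\Lambda\phi}$ for all $\phi\in\mathcal{J}^c$. *)

theory Defs
  imports Main "HOL-Library.Poly_Mapping"
begin

text \<open>The finite poset P is a type of class order with finite universe.
  Monomials of k[x_{P x N}] are exponent vectors (P x N) =>0 nat;
  polynomials are finitely supported maps from monomials to k.\<close>

type_synonym ('p) mon = "('p \<times> nat) \<Rightarrow>\<^sub>0 nat"
type_synonym ('p,'k) mpoly = "('p mon) \<Rightarrow>\<^sub>0 'k"

definition Hom :: "('p::order \<Rightarrow> nat) set" where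
  "Hom = {\<phi>. mono \<phi>}"

definition hom_ideal :: "('p::order \<Rightarrow> nat) set \<Rightarrow> bool" where
  "hom_ideal J \<longleftrightarrow> J \<subseteq> Hom \<and> (\<forall>\<phi>\<in>J. \<forall>\<psi>\<in>Hom. \<psi> \<le> \<phi> \<longrightarrow> \<psi> \<in> J)"

definition poset_ideal :: "'p::order set \<Rightarrow> bool" where
  "poset_ideal I \<longleftrightarrow> (\<forall>p\<in>I. \<forall>q. q \<le> p \<longrightarrow> q \<in> I)"

definition ascent :: "('p::order \<Rightarrow> nat) \<Rightarrow> ('p \<times> nat) set" where
  "ascent \<phi> = {(p, i). (\<forall>q. q < p \<longrightarrow> \<phi> q \<le> i) \<and> i < \<phi> p}"

text \<open>Markers (I, alpha) for J; only the values of alpha on I matter.\<close>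
definition marker :: "('p::order \<Rightarrow> nat) set \<Rightarrow> 'p set \<Rightarrow> ('p \<Rightarrow> nat) \<Rightarrow> bool" where
  "marker J I \<alpha> \<longleftrightarrow> poset_ideal I \<and>
     (\<forall>p\<in>I. \<forall>q\<in>I. p \<le> q \<longrightarrow> \<alpha> p \<le> \<alpha> q) \<and>
     (\<forall>\<phi>\<in>Hom. (\<forall>p\<in>I. \<phi> p = \<alpha> p) \<longrightarrow> \<phi> \<in> J)"

definition graph :: "'p set \<Rightarrow> ('p \<Rightarrow> nat) \<Rightarrow> ('p \<times> nat) set" where
  "graph I \<alpha> = {(p, \<alpha> p) | p. p \<in> I}"

definition sqf :: "('p \<times> nat) set \<Rightarrow> 'p mon" where
  "sqf T = (\<Sum>t\<in>T. Poly_Mapping.single t 1)"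

definition monpoly :: "'p mon \<Rightarrow> ('p,'k::comm_ring_1) mpoly" where
  "monpoly m = Poly_Mapping.single m 1"

definition gen_ideal :: "'a::comm_ring_1 set \<Rightarrow> 'a set" where
  "gen_ideal G = {x. \<exists>F c. finite F \<and> F \<subseteq> G \<and> x = (\<Sum>g\<in>F. c g * g)}"

definition coletterplace :: "('p::order \<Rightarrow> nat) set \<Rightarrow> ('p,'k::comm_ring_1) mpoly set" where
  "coletterplace J = gen_ideal {monpoly (sqf (graph I \<alpha>)) | I \<alpha>. marker J I \<alpha>}"

definition letterplace :: "('p::order \<Rightarrow> nat) set \<Rightarrow> ('p,'k::comm_ring_1) mpoly set" where
  "letterplace J = gen_ideal {monpoly (sqf (ascent \<phi>)) | \<phi>. \<phi> \<in> Hom - J}"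

definition mdvd :: "'p mon \<Rightarrow> 'p mon \<Rightarrow> bool" where
  "mdvd u v \<longleftrightarrow> (\<forall>t. Poly_Mapping.lookup u t \<le> Poly_Mapping.lookup v t)"

definition common_nontriv_div :: "'p mon \<Rightarrow> 'p mon \<Rightarrow> bool" where
  "common_nontriv_div u v \<longleftrightarrow> (\<exists>d. d \<noteq> 0 \<and> mdvd d u \<and> mdvd d v)"

end

theory Submission
  imports Defs
begin

text \<open>A monomial lies in the ideal generated by the squarefree monomials \<open>m\<^sub>T\<close>, \<open>T \<in> F\<close>,
  iff its support contains some \<open>T \<in> F\<close>. Alexander duality of the two ideals therefore says that
  the ascents \<open>\<Lambda>\<phi>\<close> (\<open>\<phi> \<notin> J\<close>) and the marker graphs \<open>\<Gamma>\<alpha>\<close> are blockers of one another.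
  An ascent meets a marker graph at a minimal point where \<open>\<phi>\<close> exceeds \<open>\<alpha>\<close>: if there is none,
  raising \<open>\<phi>\<close> off the domain of \<open>\<alpha>\<close> puts it below an element of \<open>J\<close>. Conversely, for a finite
  set \<open>S\<close> build an isotone map greedily from the bottom of \<open>P\<close>, taking at each \<open>p\<close> the least
  value above the values below \<open>p\<close> whose position lies outside \<open>S\<close> (resp. inside \<open>S\<close>). In the
  first case the map is total with ascent in \<open>S\<close> and graph disjoint from \<open>S\<close>, hence not in \<open>J\<close>;
  in the second it stops on a poset ideal and is a marker whose graph lies in \<open>S\<close>.\<close>

lemma lookup_mult_single_nonzero:
  fixes c :: "('a::cancel_comm_monoid_add) \<Rightarrow>\<^sub>0 ('b::comm_semiring_1)"
  assumes "Poly_Mapping.lookup (c * Poly_Mapping.single m 1) u \<noteq> 0"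
  obtains a where "u = a + m"
proof -
  have "(\<Sum>q. Poly_Mapping.lookup (Poly_Mapping.single m (1::'b)) q when u = l + q) = (1 when u = l + m)"
    for l :: 'a
  proof -
    have eq: "(\<lambda>q. Poly_Mapping.lookup (Poly_Mapping.single m (1::'b)) q when u = l + q) =
          (\<lambda>q. if m = q then (1 when u = l + m) else 0)"
      by (auto simp: fun_eq_iff lookup_single when_def)
    show ?thesis
      unfolding eq by simp
  qed
  then have "Poly_Mapping.lookup (c * Poly_Mapping.single m 1) u =
        (\<Sum>l. Poly_Mapping.lookup c l * (1 when u = l + m))"
    unfolding lookup_mult by simp
  moreover have "(\<Sum>l. Poly_Mapping.lookup c l * (1 when u = l + m)) = 0" if "\<nexists>a. u = a + m"
    using that by simp
  ultimately show ?thesis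
    using assms that by metis
qed

lemma lookup_sqf: "finite T \<Longrightarrow> Poly_Mapping.lookup (sqf T) t = (if t \<in> T then 1 else 0)"
  by (simp add: sqf_def lookup_sum lookup_single when_def)

lemma keys_sqf: "finite T \<Longrightarrow> Poly_Mapping.keys (sqf T) = T"
  by (auto simp: in_keys_iff lookup_sqf split: if_splits)

lemma monpoly_eq_mult_sqf:
  assumes "finite T" and "T \<subseteq> Poly_Mapping.keys u"
  shows "(monpoly u :: ('p,'k::comm_ring_1) mpoly) = monpoly (u - sqf T) * monpoly (sqf T)"
proof -
  have "u = (u - sqf T) + sqf T"
    by (rule poly_mapping_eqI)
      (use assms in \<open>auto simp: lookup_add lookup_minus lookup_sqf in_keys_iff\<close>)
  then show ?thesis
    by (metis monpoly_def mult_single mult.right_neutral)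
qed

lemma mult_mem_gen_ideal: "g \<in> G \<Longrightarrow> c * g \<in> gen_ideal G"
  unfolding gen_ideal_def by (rule CollectI, rule exI[of _ "{g}"], rule exI[of _ "\<lambda>_. c"]) simp

definition sqf_ideal :: "('p \<times> nat) set set \<Rightarrow> ('p,'k::comm_ring_1) mpoly set" where
  "sqf_ideal F = gen_ideal {monpoly (sqf T) | T. T \<in> F}"

lemma monpoly_in_sqf_ideal_iff:
  assumes fin: "\<forall>T\<in>F. finite T"
  shows "monpoly u \<in> (sqf_ideal F :: ('p,'k::comm_ring_1) mpoly set) \<longleftrightarrow>
         (\<exists>T\<in>F. T \<subseteq> Poly_Mapping.keys u)"
proof
  assume "monpoly u \<in> (sqf_ideal F :: ('p,'k) mpoly set)"
  then obtain G c where G: "G \<subseteq> {monpoly (sqf T) | T. T \<in> F}"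
    and eq: "(monpoly u :: ('p,'k) mpoly) = (\<Sum>g\<in>G. c g * g)"
    unfolding sqf_ideal_def gen_ideal_def by blast
  have "(\<Sum>g\<in>G. Poly_Mapping.lookup (c g * g) u) = Poly_Mapping.lookup (monpoly u :: ('p,'k) mpoly) u"
    by (simp add: eq lookup_sum)
  also have "\<dots> \<noteq> 0"
    by (simp add: monpoly_def)
  finally obtain g where g: "g \<in> G" "Poly_Mapping.lookup (c g * g) u \<noteq> 0"
    by (meson sum.neutral)
  obtain T where T: "T \<in> F" "g = monpoly (sqf T)"
    using G g(1) by blast
  obtain a where "u = a + sqf T"
    using lookup_mult_single_nonzero g(2) T(2) unfolding monpoly_def by metis
  then have "T \<subseteq> Poly_Mapping.keys u"
    using fin T(1) by (auto simp: in_keys_iff lookup_add lookup_sqf)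
  with T(1) show "\<exists>T\<in>F. T \<subseteq> Poly_Mapping.keys u" by blast
next
  assume "\<exists>T\<in>F. T \<subseteq> Poly_Mapping.keys u"
  then obtain T where T: "T \<in> F" "T \<subseteq> Poly_Mapping.keys u" by blast
  have "monpoly (sqf T) \<in> {monpoly (sqf T) | T. T \<in> F}"
    using T(1) by blast
  then have "monpoly (u - sqf T) * monpoly (sqf T) \<in> (sqf_ideal F :: ('p,'k) mpoly set)"
    unfolding sqf_ideal_def by (rule mult_mem_gen_ideal)
  then show "monpoly u \<in> (sqf_ideal F :: ('p,'k) mpoly set)"
    using monpoly_eq_mult_sqf[where 'k='k, of T u] T fin by simp
qed

lemma common_nontriv_div_iff_keys:
  "common_nontriv_div u w \<longleftrightarrow> Poly_Mapping.keys u \<inter> Poly_Mapping.keys w \<noteq> {}"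
proof
  assume "common_nontriv_div u w"
  then obtain d where d: "d \<noteq> 0" "mdvd d u" "mdvd d w"
    unfolding common_nontriv_div_def by blast
  then obtain t where "t \<in> Poly_Mapping.keys d"
    by (metis keys_eq_empty ex_in_conv)
  with d(2,3) have "t \<in> Poly_Mapping.keys u" "t \<in> Poly_Mapping.keys w"
    unfolding mdvd_def in_keys_iff by (metis le_zero_eq)+
  then show "Poly_Mapping.keys u \<inter> Poly_Mapping.keys w \<noteq> {}"
    by blast
next
  assume "Poly_Mapping.keys u \<inter> Poly_Mapping.keys w \<noteq> {}"
  then obtain t where "t \<in> Poly_Mapping.keys u" "t \<in> Poly_Mapping.keys w"
    by blast
  then have "mdvd (Poly_Mapping.single t 1) u" "mdvd (Poly_Mapping.single t 1) w"
    by (auto simp: mdvd_def lookup_single when_def in_keys_iff)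
  moreover have "Poly_Mapping.single t (1::nat) \<noteq> 0"
    by (metis lookup_single_eq lookup_zero one_neq_zero)
  ultimately show "common_nontriv_div u w"
    unfolding common_nontriv_div_def by blast
qed

lemma sqf_ideal_alexander_dual:
  assumes fin: "\<forall>A\<in>\<A>. finite A" "\<forall>G\<in>\<G>. finite G"
    and meet: "\<forall>A\<in>\<A>. \<forall>G\<in>\<G>. A \<inter> G \<noteq> {}"
    and blocker: "\<And>S. finite S \<Longrightarrow> \<forall>G\<in>\<G>. G \<inter> S \<noteq> {} \<Longrightarrow> \<exists>A\<in>\<A>. A \<subseteq> S"
  shows "monpoly u \<in> (sqf_ideal \<A> :: ('p,'k::comm_ring_1) mpoly set) \<longleftrightarrow>
    (\<forall>w. monpoly w \<in> (sqf_ideal \<G> :: ('p,'k) mpoly set) \<longrightarrow> common_nontriv_div u w)"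
proof
  assume "monpoly u \<in> (sqf_ideal \<A> :: ('p,'k) mpoly set)"
  then obtain A where "A \<in> \<A>" "A \<subseteq> Poly_Mapping.keys u"
    using monpoly_in_sqf_ideal_iff[OF fin(1)] by blast
  with meet show "\<forall>w. monpoly w \<in> (sqf_ideal \<G> :: ('p,'k) mpoly set) \<longrightarrow> common_nontriv_div u w"
    unfolding monpoly_in_sqf_ideal_iff[OF fin(2)] common_nontriv_div_iff_keys by blast
next
  assume dual: "\<forall>w. monpoly w \<in> (sqf_ideal \<G> :: ('p,'k) mpoly set) \<longrightarrow> common_nontriv_div u w"
  have "G \<inter> Poly_Mapping.keys u \<noteq> {}" if G: "G \<in> \<G>" for G
  proof -
    have keys: "Poly_Mapping.keys (sqf G) = G"
      using G fin(2) by (simp add: keys_sqf)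
    then have "monpoly (sqf G) \<in> (sqf_ideal \<G> :: ('p,'k) mpoly set)"
      using G by (auto simp: monpoly_in_sqf_ideal_iff[OF fin(2)])
    with dual keys show ?thesis
      by (auto simp: common_nontriv_div_iff_keys)
  qed
  then show "monpoly u \<in> (sqf_ideal \<A> :: ('p,'k) mpoly set)"
    using blocker[OF finite_keys, of u] by (simp add: monpoly_in_sqf_ideal_iff[OF fin(1)])
qed

lemma finite_ascent: "finite (ascent (\<phi> :: 'p::{order,finite} \<Rightarrow> nat))"
  by (rule finite_subset[of _ "\<Union>p. {p} \<times> {..<\<phi> p}"]) (auto simp: ascent_def)

lemma finite_graph: "finite (graph I (\<alpha> :: 'p::finite \<Rightarrow> nat))"
  by (rule finite_subset[of _ "range (\<lambda>p. (p, \<alpha> p))"]) (auto simp: graph_def)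

lemma ascent_cong: "\<forall>q\<le>p. \<phi> q = \<psi> q \<Longrightarrow> (p, i) \<in> ascent \<phi> \<longleftrightarrow> (p, i) \<in> ascent \<psi>"
  by (auto simp: ascent_def)

lemma patch_in_Hom:
  fixes \<alpha> :: "'p::order \<Rightarrow> nat"
  assumes I: "poset_ideal I" and \<alpha>: "\<forall>p\<in>I. \<forall>q\<in>I. p \<le> q \<longrightarrow> \<alpha> p \<le> \<alpha> q"
    and \<phi>: "\<phi> \<in> Hom" and c: "\<forall>p\<in>I. \<alpha> p \<le> c"
  shows "(\<lambda>p. if p \<in> I then \<alpha> p else max (\<phi> p) c) \<in> Hom"
  unfolding Hom_def mem_Collect_eq
proof (rule monoI)
  fix x y :: 'p
  assume xy: "x \<le> y"
  then have "\<phi> x \<le> \<phi> y"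
    using \<phi> by (auto simp: Hom_def mono_def)
  moreover have "x \<in> I" if "y \<in> I"
    using I that xy by (auto simp: poset_ideal_def)
  ultimately show "(if x \<in> I then \<alpha> x else max (\<phi> x) c) \<le> (if y \<in> I then \<alpha> y else max (\<phi> y) c)"
    using \<alpha> c xy by (auto simp: le_max_iff_disj)
qed

definition ascents :: "('p::order \<Rightarrow> nat) set \<Rightarrow> ('p \<times> nat) set set" where
  "ascents J = ascent ` (Hom - J)"

definition marker_graphs :: "('p::order \<Rightarrow> nat) set \<Rightarrow> ('p \<times> nat) set set" where
  "marker_graphs J = {graph I \<alpha> | I \<alpha>. marker J I \<alpha>}"

lemma ascent_meets_marker_graph:
  fixes \<phi> :: "'p::{order,finite} \<Rightarrow> nat"
  assumes J: "hom_ideal J" and \<phi>: "\<phi> \<in> Hom - J" and m: "marker J I \<alpha>"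
  shows "ascent \<phi> \<inter> graph I \<alpha> \<noteq> {}"
proof -
  have I: "poset_ideal I" and \<alpha>: "\<forall>p\<in>I. \<forall>q\<in>I. p \<le> q \<longrightarrow> \<alpha> p \<le> \<alpha> q"
    and ext: "\<forall>\<psi>\<in>Hom. (\<forall>p\<in>I. \<psi> p = \<alpha> p) \<longrightarrow> \<psi> \<in> J"
    using m unfolding marker_def by auto
  have "{p\<in>I. \<alpha> p < \<phi> p} \<noteq> {}"
  proof
    assume "{p\<in>I. \<alpha> p < \<phi> p} = {}"
    define \<psi> where "\<psi> = (\<lambda>p. if p \<in> I then \<alpha> p else max (\<phi> p) (\<Sum>q\<in>I. \<alpha> q))"
    have "\<psi> \<in> Hom"
      unfolding \<psi>_def using I \<alpha> \<phi> by (intro patch_in_Hom) (auto intro: member_le_sum)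
    then have "\<psi> \<in> J"
      using ext by (simp add: \<psi>_def)
    moreover have "\<phi> \<le> \<psi>"
      using \<open>{p\<in>I. \<alpha> p < \<phi> p} = {}\<close> by (auto simp: le_fun_def \<psi>_def not_less)
    ultimately show False
      using J \<phi> unfolding hom_ideal_def by blast
  qed
  then obtain p where p: "p \<in> I" "\<alpha> p < \<phi> p" and min: "\<forall>q\<in>I. \<alpha> q < \<phi> q \<longrightarrow> q \<le> p \<longrightarrow> p = q"
    using finite_has_minimal[of "{p\<in>I. \<alpha> p < \<phi> p}"] by auto
  have "\<phi> q \<le> \<alpha> p" if "q < p" for q
  proof -
    have "q \<in> I"
      using I p(1) that by (auto simp: poset_ideal_def)
    with min that have "\<phi> q \<le> \<alpha> q"
      by force
    also have "\<alpha> q \<le> \<alpha> p"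
      using \<alpha> \<open>q \<in> I\<close> p(1) that by auto
    finally show ?thesis .
  qed
  with p have "(p, \<alpha> p) \<in> ascent \<phi> \<inter> graph I \<alpha>"
    by (auto simp: ascent_def graph_def)
  then show ?thesis
    by blast
qed

lemma ascents_meet_marker_graphs:
  assumes "hom_ideal (J :: ('p::{order,finite} \<Rightarrow> nat) set)"
  shows "\<forall>A\<in>ascents J. \<forall>G\<in>marker_graphs J. A \<inter> G \<noteq> {}"
  using ascent_meets_marker_graph[OF assms] by (auto simp: ascents_def marker_graphs_def)

text \<open>On the ideal I, the value \<open>\<beta> p\<close> is the least \<open>i\<close> above all \<open>\<beta> q\<close>, \<open>q < p\<close>,
  with \<open>(p, i) \<in> T\<close>.\<close>

definition greedy_on :: "('p::order \<times> nat) set \<Rightarrow> 'p set \<Rightarrow> ('p \<Rightarrow> nat) \<Rightarrow> bool" where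
  "greedy_on T I \<beta> \<longleftrightarrow> poset_ideal I \<and> (\<forall>p\<in>I. \<forall>q\<in>I. p \<le> q \<longrightarrow> \<beta> p \<le> \<beta> q) \<and>
     graph I \<beta> \<subseteq> T \<and> (\<forall>(p, i)\<in>ascent \<beta>. p \<in> I \<longrightarrow> (p, i) \<notin> T)"

lemma greedy_on_insert:
  assumes g: "greedy_on T I \<beta>" and p: "p \<notin> I" "\<forall>q<p. q \<in> I"
    and i: "(p, i) \<in> T" "\<forall>q<p. \<beta> q \<le> i"
  shows "greedy_on T (insert p I) (\<beta>(p := LEAST i. (\<forall>q<p. \<beta> q \<le> i) \<and> (p, i) \<in> T))"
proof -
  define i0 where "i0 = (LEAST i. (\<forall>q<p. \<beta> q \<le> i) \<and> (p, i) \<in> T)"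
  have I: "poset_ideal I" and \<beta>: "\<forall>x\<in>I. \<forall>y\<in>I. x \<le> y \<longrightarrow> \<beta> x \<le> \<beta> y"
    and graph: "graph I \<beta> \<subseteq> T" and asc: "\<forall>(x, j)\<in>ascent \<beta>. x \<in> I \<longrightarrow> (x, j) \<notin> T"
    using g by (auto simp: greedy_on_def)
  have i0: "\<forall>q<p. \<beta> q \<le> i0" "(p, i0) \<in> T"
    using LeastI[of "\<lambda>i. (\<forall>q<p. \<beta> q \<le> i) \<and> (p, i) \<in> T" i] i by (auto simp: i0_def)
  have i0_least: "(p, j) \<notin> T" if "j < i0" "\<forall>q<p. \<beta> q \<le> j" for j
    using not_less_Least[of j "\<lambda>i. (\<forall>q<p. \<beta> q \<le> i) \<and> (p, i) \<in> T"] that by (auto simp: i0_def)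
  have down: "q \<in> I" if "x \<in> I" "q \<le> x" for x q
    using I that by (auto simp: poset_ideal_def)
  have agree: "\<forall>q\<le>x. (\<beta>(p := i0)) q = \<beta> q" if "x \<in> I" for x
    using down[OF that] p(1) by auto
  have "poset_ideal (insert p I)"
    unfolding poset_ideal_def
  proof (intro ballI allI impI)
    fix x q
    assume "x \<in> insert p I" "q \<le> x"
    then show "q \<in> insert p I"
      using p(2) down by (cases "q = x") (auto simp: order.strict_iff_order)
  qed
  moreover have "(\<beta>(p := i0)) x \<le> (\<beta>(p := i0)) y"
    if "x \<in> insert p I" "y \<in> insert p I" "x \<le> y" for x y
  proof (cases "x = p")
    case True
    then show ?thesis
      using that down p(1) by (cases "y = p") auto
  next
    case False
    then show ?thesis
      using that \<beta> i0(1) p(1) by (cases "y = p") (auto simp: order.strict_iff_order)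
  qed
  moreover have "graph (insert p I) (\<beta>(p := i0)) \<subseteq> T"
    using graph i0(2) p(1) by (auto simp: graph_def)
  moreover have "(x, j) \<notin> T" if "(x, j) \<in> ascent (\<beta>(p := i0))" "x \<in> insert p I" for x j
  proof (cases "x = p")
    case True
    then show ?thesis
      using that(1) i0_least by (auto simp: ascent_def less_le)
  next
    case False
    then have "(x, j) \<in> ascent \<beta>"
      using that ascent_cong[OF agree] by blast
    with False that(2) asc show ?thesis
      by auto
  qed
  ultimately show ?thesis
    unfolding greedy_on_def i0_def[symmetric] by blast
qed

lemma greedy_on_maximal:
  fixes T :: "('p::{order,finite} \<times> nat) set"
  obtains I \<beta> where "greedy_on T I \<beta>"
    and "\<And>p i. p \<notin> I \<Longrightarrow> \<forall>q<p. q \<in> I \<Longrightarrow> \<forall>q<p. \<beta> q \<le> i \<Longrightarrow> (p, i) \<notin> T"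
proof -
  have "greedy_on T {} (\<lambda>_. 0)"
    by (simp add: greedy_on_def poset_ideal_def graph_def)
  moreover have "\<forall>Y. greedy_on T (fst Y) (snd Y) \<longrightarrow> card (fst Y) < Suc (card (UNIV :: 'p set))"
    by (simp add: card_mono less_Suc_eq_le)
  ultimately obtain X where X: "greedy_on T (fst X) (snd X)"
    and maximal: "\<forall>Y. greedy_on T (fst Y) (snd Y) \<longrightarrow> card (fst Y) \<le> card (fst X)"
    using ex_has_greatest_nat[of "\<lambda>Y. greedy_on T (fst Y) (snd Y)" "({}, \<lambda>_. 0)"
        "\<lambda>Y. card (fst Y)"] by (metis fst_conv snd_conv)
  have "(p, i) \<notin> T" if "p \<notin> fst X" "\<forall>q<p. q \<in> fst X" "\<forall>q<p. snd X q \<le> i" for p i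
  proof
    assume "(p, i) \<in> T"
    with greedy_on_insert[OF X that(1,2)] that(3) maximal
    have "card (insert p (fst X)) \<le> card (fst X)"
      by fastforce
    with that(1) show False
      by simp
  qed
  with X show ?thesis
    using that by blast
qed

lemma finite_pair_set_bounded:
  assumes "finite (S :: ('a \<times> nat) set)"
  obtains N where "\<forall>(p, i)\<in>S. i < N"
  using assms finite_nat_set_iff_bounded[of "snd ` S"] by fastforce

lemma ascents_block_marker_graphs:
  fixes J :: "('p::{order,finite} \<Rightarrow> nat) set"
  assumes S: "finite S" and hit: "\<forall>G\<in>marker_graphs J. G \<inter> S \<noteq> {}"
  shows "\<exists>A\<in>ascents J. A \<subseteq> S"
proof -
  obtain I \<beta> where g: "greedy_on (- S) I \<beta>"
    and saturated: "\<And>p i. p \<notin> I \<Longrightarrow> \<forall>q<p. q \<in> I \<Longrightarrow> \<forall>q<p. \<beta> q \<le> i \<Longrightarrow> (p, i) \<in> S"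
    using greedy_on_maximal by (metis ComplI)
  obtain N where N: "\<forall>(p, i)\<in>S. i < N"
    using finite_pair_set_bounded[OF S] .
  have "I = UNIV"
  proof (rule ccontr)
    assume "I \<noteq> UNIV"
    then obtain p where p: "p \<notin> I" "\<forall>q\<in>- I. q \<le> p \<longrightarrow> p = q"
      using finite_has_minimal[of "- I"] by auto
    then have "\<forall>q<p. q \<in> I"
      by (auto simp: order.strict_iff_order)
    moreover have "\<forall>q<p. \<beta> q \<le> N + (\<Sum>q\<in>UNIV. \<beta> q)"
      by (simp add: member_le_sum trans_le_add2)
    ultimately have "(p, N + (\<Sum>q\<in>UNIV. \<beta> q)) \<in> S"
      using saturated p(1) by blast
    with N show False
      by fastforce
  qed
  with g have \<beta>: "\<beta> \<in> Hom" "ascent \<beta> \<subseteq> S" "graph UNIV \<beta> \<inter> S = {}"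
    by (auto simp: greedy_on_def Hom_def mono_def)
  have "\<beta> \<notin> J"
  proof
    assume "\<beta> \<in> J"
    with \<beta>(1) have "marker J UNIV \<beta>"
      by (auto simp: marker_def poset_ideal_def Hom_def mono_def fun_eq_iff[symmetric])
    with hit \<beta>(3) show False
      by (auto simp: marker_graphs_def)
  qed
  with \<beta> show ?thesis
    by (auto simp: ascents_def)
qed

lemma ascent_patch_below_in:
  assumes "(p, i) \<in> ascent (\<lambda>p. if p \<in> I then \<beta> p else max (\<psi> p) N)" and "i < N" and "q < p"
  shows "q \<in> I"
  using assms by (auto simp: ascent_def split: if_splits)

lemma greedy_on_marker:
  fixes J :: "('p::{order,finite} \<Rightarrow> nat) set"
  assumes J: "hom_ideal J" and S: "finite S" and hit: "\<forall>A\<in>ascents J. A \<inter> S \<noteq> {}"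
    and g: "greedy_on S I \<beta>"
    and saturated: "\<And>p i. p \<notin> I \<Longrightarrow> \<forall>q<p. q \<in> I \<Longrightarrow> \<forall>q<p. \<beta> q \<le> i \<Longrightarrow> (p, i) \<notin> S"
  shows "marker J I \<beta>"
proof -
  have I: "poset_ideal I" and \<beta>: "\<forall>p\<in>I. \<forall>q\<in>I. p \<le> q \<longrightarrow> \<beta> p \<le> \<beta> q"
    and graph: "graph I \<beta> \<subseteq> S" and asc: "\<forall>(p, i)\<in>ascent \<beta>. p \<in> I \<longrightarrow> (p, i) \<notin> S"
    using g by (auto simp: greedy_on_def)
  obtain N where N: "\<forall>(p, i)\<in>S. i < N"
    using finite_pair_set_bounded[OF S] .
  have "\<psi> \<in> J" if \<psi>: "\<psi> \<in> Hom" "\<forall>p\<in>I. \<psi> p = \<beta> p" for \<psi>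
  proof (rule ccontr)
    assume "\<psi> \<notin> J"
    define \<phi> where "\<phi> = (\<lambda>p. if p \<in> I then \<beta> p else max (\<psi> p) N)"
    have "\<forall>p\<in>I. \<beta> p \<le> N"
      using graph N by (fastforce simp: graph_def)
    then have "\<phi> \<in> Hom"
      unfolding \<phi>_def using I \<beta> \<psi>(1) by (intro patch_in_Hom)
    moreover have "\<psi> \<le> \<phi>"
      using \<psi>(2) by (auto simp: le_fun_def \<phi>_def)
    ultimately have "\<phi> \<notin> J"
      using J \<psi>(1) \<open>\<psi> \<notin> J\<close> unfolding hom_ideal_def by blast
    with \<open>\<phi> \<in> Hom\<close> obtain p i where pi: "(p, i) \<in> ascent \<phi>" "(p, i) \<in> S"
      using hit by (fastforce simp: ascents_def)
    then have I_below: "\<forall>q<p. q \<in> I"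
      using N ascent_patch_below_in[of p i I \<beta> \<psi> N] by (fastforce simp: \<phi>_def)
    show False
    proof (cases "p \<in> I")
      case True
      then have "(p, i) \<in> ascent \<beta>"
        using pi(1) ascent_cong[of p \<phi> \<beta>] I by (auto simp: \<phi>_def poset_ideal_def)
      with True asc pi(2) show False
        by blast
    next
      case False
      have "\<forall>q<p. \<beta> q \<le> i"
        using pi(1) I_below by (simp add: ascent_def \<phi>_def)
      with saturated[of p i] False I_below pi(2) show False
        by blast
    qed
  qed
  with I \<beta> show ?thesis
    by (auto simp: marker_def)
qed

lemma marker_graphs_block_ascents:
  fixes J :: "('p::{order,finite} \<Rightarrow> nat) set"
  assumes J: "hom_ideal J" and S: "finite S" and hit: "\<forall>A\<in>ascents J. A \<inter> S \<noteq> {}"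
  shows "\<exists>G\<in>marker_graphs J. G \<subseteq> S"
proof -
  obtain I \<beta> where g: "greedy_on S I \<beta>"
    and "\<And>p i. p \<notin> I \<Longrightarrow> \<forall>q<p. q \<in> I \<Longrightarrow> \<forall>q<p. \<beta> q \<le> i \<Longrightarrow> (p, i) \<notin> S"
    using greedy_on_maximal by metis
  then have "marker J I \<beta>"
    using greedy_on_marker[OF J S hit] by blast
  moreover have "graph I \<beta> \<subseteq> S"
    using g by (simp add: greedy_on_def)
  ultimately show ?thesis
    by (auto simp: marker_graphs_def)
qed

lemma letterplace_eq_sqf_ideal: "letterplace J = sqf_ideal (ascents J)"
  unfolding letterplace_def sqf_ideal_def ascents_def by (rule arg_cong[where f = gen_ideal]) auto

lemma coletterplace_eq_sqf_ideal: "coletterplace J = sqf_ideal (marker_graphs J)"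
  unfolding coletterplace_def sqf_ideal_def marker_graphs_def by (rule arg_cong[where f = gen_ideal]) auto

theorem proposition1p11:
  fixes J :: "('p::{order,finite} \<Rightarrow> nat) set"
    and k_type :: "'k::field itself"
  assumes "hom_ideal J"
  shows "(\<forall>u. monpoly u \<in> (letterplace J :: ('p,'k) mpoly set) \<longleftrightarrow>
              (\<forall>w. monpoly w \<in> (coletterplace J :: ('p,'k) mpoly set) \<longrightarrow> common_nontriv_div u w))
       \<and> (\<forall>w. monpoly w \<in> (coletterplace J :: ('p,'k) mpoly set) \<longleftrightarrow>
              (\<forall>u. monpoly u \<in> (letterplace J :: ('p,'k) mpoly set) \<longrightarrow> common_nontriv_div w u))"
proof -
  have fin: "\<forall>A\<in>ascents J. finite A" "\<forall>G\<in>marker_graphs J. finite G"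
    by (auto simp: ascents_def marker_graphs_def finite_ascent finite_graph)
  note meet = ascents_meet_marker_graphs[OF assms]
  have meet': "\<forall>G\<in>marker_graphs J. \<forall>A\<in>ascents J. G \<inter> A \<noteq> {}"
    using meet by blast
  show ?thesis
    unfolding letterplace_eq_sqf_ideal coletterplace_eq_sqf_ideal
    by (intro conjI allI sqf_ideal_alexander_dual fin meet meet'
        ascents_block_marker_graphs marker_graphs_block_ascents[OF assms])
qed

end
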